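(* There is a constant $C$ such that for every complex $M\times N$ matrix $A=(a_{jk})$, $$h(A)\le C\sup_{1\le j\le M}\sum_{k=0}^N|a_{jk}-a_{j,k+1}|,$$ where one sets $a_{j0}=a_{j,N+1}=0$ for all $1\le j\le M$.
   Context: Let $(\Omega,\Sigma,\mathbb P)$ be a probability space with a dyadic filtration $(\Sigma_k)_{k\ge0}$ (increasing sub-$\sigma$-algebras, each $\Sigma_k$ atomic with exactly $2^k$ atoms of probability $2^{-k}$); $\mathcal E_kf=\mathbb E(f\mid\Sigma_k)$, $\Delta_kf=\mathcal E_kf-\mathcal E_{k-1}f$ ($k\ge1$). For a complex $M\times N$ matrix $A=(a_{jk})$, $h(A)$ is the least constant such that $\big\|\max_{1\le j\le M}|\sum_{k=1}^N a_{jk}\Delta_kf|\big\|_{L_2}\le h(A)\|f\|_{L_2}$ for all $f\in L_2(\Omega)$; it does not depend on the choice of probability space and dyadic filtration. *)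

theory Defs
  imports "HOL-Analysis.Analysis"
begin

text \<open>Concrete model of a probability space with dyadic filtration:
  \<Omega> = [0,1) with Lebesgue measure, \<Sigma>_k generated by the 2^k dyadic intervals
  of length 2^-k.  (By the paper, h(A) does not depend on this choice.)\<close>

definition dyadic_interval :: "nat \<Rightarrow> real \<Rightarrow> real set" where
  "dyadic_interval k x =
     {of_int \<lfloor>2^k * x\<rfloor> / 2^k ..< (of_int \<lfloor>2^k * x\<rfloor> + 1) / 2^k}"

definition dyadic_cond_exp :: "nat \<Rightarrow> (real \<Rightarrow> complex) \<Rightarrow> real \<Rightarrow> complex" where
  "dyadic_cond_exp k f x = (2 ^ k) * (LINT t : dyadic_interval k x | lborel. f t)"

definition dyadic_diff :: "nat \<Rightarrow> (real \<Rightarrow> complex) \<Rightarrow> real \<Rightarrow> complex" where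
  "dyadic_diff k f x = dyadic_cond_exp k f x - dyadic_cond_exp (k - 1) f x"

definition L2sq :: "(real \<Rightarrow> complex) \<Rightarrow> ennreal" where
  "L2sq f = (\<integral>\<^sup>+ x \<in> {0..<1}. ennreal ((cmod (f x))\<^sup>2) \<partial>lborel)"

definition in_L2 :: "(real \<Rightarrow> complex) \<Rightarrow> bool" where
  "in_L2 f \<longleftrightarrow> f \<in> borel_measurable lborel \<and> L2sq f < \<infinity>"

definition max_transform ::
  "nat \<Rightarrow> nat \<Rightarrow> (nat \<Rightarrow> nat \<Rightarrow> complex) \<Rightarrow> (real \<Rightarrow> complex) \<Rightarrow> real \<Rightarrow> real" where
  "max_transform M N a f x = (MAX j \<in> {1..M}. cmod (\<Sum>k = 1..N. a j k * dyadic_diff k f x))"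

text \<open>h(A): the least constant c \<ge> 0 with \<parallel>max_j |\<dots>|\<parallel>_2 \<le> c \<parallel>f\<parallel>_2 for all f \<in> L2
  (inequality written in squared form); \<infinity> if no such constant exists.\<close>
definition h_const :: "nat \<Rightarrow> nat \<Rightarrow> (nat \<Rightarrow> nat \<Rightarrow> complex) \<Rightarrow> ereal" where
  "h_const M N a = Inf {ereal c | c. c \<ge> 0 \<and>
     (\<forall>f. in_L2 f \<longrightarrow>
        L2sq (\<lambda>x. complex_of_real (max_transform M N a f x)) \<le> ennreal (c\<^sup>2) * L2sq f)}"

definition ext_entry :: "nat \<Rightarrow> (nat \<Rightarrow> nat \<Rightarrow> complex) \<Rightarrow> nat \<Rightarrow> nat \<Rightarrow> complex" where
  "ext_entry N a j k = (if 1 \<le> k \<and> k \<le> N then a j k else 0)"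

end

theory Submission
  imports Defs
begin

text \<open>Summation by parts rewrites \<open>\<Sum>k. a j k * \<Delta>\<^sub>k f\<close> as
  \<open>\<Sum>k. (a j k - a j (k + 1)) * E\<^sub>k f\<close>, so pointwise the maximal function is at most
  \<open>V * max\<^sub>k\<^sub>\<le>\<^sub>N \<bar>E\<^sub>k f\<bar>\<close>, where \<open>V\<close> is the largest row variation. The averages
  \<open>E\<^sub>k \<bar>f\<bar>\<close> form a dyadic martingale dominating \<open>\<bar>E\<^sub>k f\<bar>\<close>, and Doob's maximal
  inequality bounds the \<open>L\<^sup>2\<close> norm of its running maximum by \<open>2 \<parallel>f\<parallel>\<^sub>2\<close>. Hence
  \<open>h(A) \<le> 2 V\<close>.\<close>

primrec running_max :: "(nat \<Rightarrow> real) \<Rightarrow> nat \<Rightarrow> real" where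
  "running_max x 0 = x 0"
| "running_max x (Suc n) = max (running_max x n) (x (Suc n))"

lemma running_max_ge: "k \<le> n \<Longrightarrow> x k \<le> running_max x n"
  by (induction n) (auto simp: le_Suc_eq le_max_iff_disj)

lemma running_max_cong: "(\<And>m. m \<le> n \<Longrightarrow> x m = x' m) \<Longrightarrow> running_max x n = running_max x' n"
  by (induction n) auto

lemma running_max_sq_half_le:
  "(running_max x n)\<^sup>2 / 2 \<le> running_max x n * x n - (\<Sum>k<n. running_max x k * (x (Suc k) - x k))"
proof (induction n)
  case 0
  then show ?case by (simp add: power2_eq_square)
next
  case (Suc n)
  define h where "h = running_max x n"
  have step: "(max h (x (Suc n)))\<^sup>2 / 2 - h\<^sup>2 / 2 \<le> (max h (x (Suc n)) - h) * x (Suc n)"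
  proof (cases "h \<le> x (Suc n)")
    case True
    have "0 \<le> (x (Suc n) - h)\<^sup>2 / 2" by simp
    then show ?thesis using True by (simp add: max_def power2_eq_square algebra_simps)
  qed (simp add: max_def)
  show ?case using Suc step by (simp add: h_def[symmetric] algebra_simps)
qed

text \<open>A pathwise form of Doob's \<open>L\<^sup>2\<close> maximal inequality: for a martingale the subtracted
  martingale transform has expectation zero.\<close>
lemma running_max_sq_le:
  "(running_max x n)\<^sup>2 \<le> 4 * (x n)\<^sup>2 - 4 * (\<Sum>k<n. running_max x k * (x (Suc k) - x k))"
proof -
  have "0 \<le> (running_max x n / 2 - x n)\<^sup>2" by simp
  then show ?thesis using running_max_sq_half_le[of x n] by (simp add: power2_eq_square algebra_simps)
qed

lemma sum_lessThan_mult_div: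
  fixes g :: "nat \<Rightarrow> 'a::comm_semiring_1"
  assumes "0 < b"
  shows "(\<Sum>i<a * b. g (i div b)) = of_nat b * (\<Sum>p<a. g p)"
proof (induction a)
  case (Suc a)
  have "i div b = a" if "i \<in> {a * b..<a * b + b}" for i
    using assms that by (auto simp: div_nat_eqI mult.commute)
  then have "(\<Sum>i\<in>{a * b..<a * b + b}. g (i div b)) = (\<Sum>i\<in>{a * b..<a * b + b}. g a)"
    by (intro sum.cong) auto
  moreover have "{..<Suc a * b} = {..<a * b} \<union> {a * b..<a * b + b}" by auto
  ultimately show ?case using Suc by (simp add: sum.union_disjoint ivl_disj_int algebra_simps)
qed simp

lemma sum_lessThan_double:
  fixes g :: "nat \<Rightarrow> 'a::comm_monoid_add"
  shows "(\<Sum>p<2 * m. g p) = (\<Sum>j<m. g (2 * j) + g (2 * j + 1))"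
  by (induction m) (auto simp: algebra_simps)

lemma div_power_div_power:
  "m \<le> k \<Longrightarrow> k \<le> N \<Longrightarrow> i div 2 ^ (N - k) div 2 ^ (k - m) = (i::nat) div 2 ^ (N - m)"
proof -
  assume "m \<le> k" "k \<le> N"
  then have "N - m = (N - k) + (k - m)" by simp
  then show ?thesis by (simp add: power_add div_mult2_eq)
qed

text \<open>\<open>y k j\<close> is the value of a martingale on the \<open>j\<close>-th dyadic atom of level \<open>k\<close>; the leaf
  \<open>i < 2 ^ N\<close> lies in the level-\<open>m\<close> atom \<open>i div 2 ^ (N - m)\<close>.\<close>
definition dyadic_martingale :: "nat \<Rightarrow> (nat \<Rightarrow> nat \<Rightarrow> real) \<Rightarrow> bool" where
  "dyadic_martingale N y \<longleftrightarrow>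
     (\<forall>k<N. \<forall>j<2 ^ k. 2 * y k j = y (Suc k) (2 * j) + y (Suc k) (2 * j + 1))"

lemma sum_predictable_mult_dyadic_increment_eq_0:
  assumes y: "dyadic_martingale N y" and k: "k < N"
  shows "(\<Sum>i<2 ^ N. H (i div 2 ^ (N - k)) *
            (y (Suc k) (i div 2 ^ (N - Suc k)) - y k (i div 2 ^ (N - k)))) = 0"
proof -
  define b :: nat where "b = 2 ^ (N - Suc k)"
  define \<Phi> where "\<Phi> p = H (p div 2) * (y (Suc k) p - y k (p div 2))" for p
  have "i div 2 ^ (N - k) = i div b div 2" for i
    using div_power_div_power[of k "Suc k" N i] k by (simp add: b_def)
  moreover have "(2::nat) ^ N = 2 * 2 ^ k * b"
    using k by (simp add: b_def flip: power_Suc power_add)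
  ultimately have "(\<Sum>i<2 ^ N. H (i div 2 ^ (N - k)) *
            (y (Suc k) (i div 2 ^ (N - Suc k)) - y k (i div 2 ^ (N - k))))
      = (\<Sum>i<2 * 2 ^ k * b. \<Phi> (i div b))"
    by (simp add: \<Phi>_def b_def)
  also have "\<dots> = of_nat b * (\<Sum>j<2 ^ k. \<Phi> (2 * j) + \<Phi> (2 * j + 1))"
    by (simp add: sum_lessThan_mult_div b_def sum_lessThan_double)
  also have "(\<Sum>j<2 ^ k. \<Phi> (2 * j) + \<Phi> (2 * j + 1)) = 0"
    using y k by (intro sum.neutral) (auto simp: dyadic_martingale_def \<Phi>_def algebra_simps)
  finally show ?thesis by simp
qed

lemma dyadic_martingale_doob_maximal_L2:
  assumes y: "dyadic_martingale N y"
  shows "(\<Sum>i<2 ^ N. (running_max (\<lambda>m. y m (i div 2 ^ (N - m))) N)\<^sup>2) \<le> 4 * (\<Sum>i<2 ^ N. (y N i)\<^sup>2)"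
proof -
  let ?path = "\<lambda>i m. y m (i div 2 ^ (N - m))"
  have predictable: "running_max (?path i) k = running_max (\<lambda>m. y m (j div 2 ^ (k - m))) k"
    if "k \<le> N" "j = i div 2 ^ (N - k)" for i j k
    using that by (intro running_max_cong) (simp add: div_power_div_power)
  have transform: "(\<Sum>i<2 ^ N. running_max (?path i) k * (?path i (Suc k) - ?path i k)) = 0"
    if "k < N" for k
    using sum_predictable_mult_dyadic_increment_eq_0[OF y that] that by (simp add: predictable)
  have "(\<Sum>i<2 ^ N. (running_max (?path i) N)\<^sup>2) \<le>
        (\<Sum>i<2 ^ N. 4 * (?path i N)\<^sup>2 - 4 * (\<Sum>k<N. running_max (?path i) k * (?path i (Suc k) - ?path i k)))"
    by (intro sum_mono running_max_sq_le)
  also have "\<dots> = 4 * (\<Sum>i<2 ^ N. (y N i)\<^sup>2) -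
      4 * (\<Sum>k<N. \<Sum>i<2 ^ N. running_max (?path i) k * (?path i (Suc k) - ?path i k))"
    by (simp add: sum_subtractf sum_distrib_left sum.swap[of _ "{..<N}"])
  finally show ?thesis by (simp add: transform)
qed

definition dyadic_atom :: "nat \<Rightarrow> nat \<Rightarrow> real set" where
  "dyadic_atom k j = {real j / 2 ^ k ..< (real j + 1) / 2 ^ k}"

lemma dyadic_atom_sets [measurable]: "dyadic_atom k j \<in> sets lborel"
  by (simp add: dyadic_atom_def)

lemma emeasure_dyadic_atom: "emeasure lborel (dyadic_atom k j) = ennreal (1 / 2 ^ k)"
proof -
  have "(real j + 1) / 2 ^ k - real j / 2 ^ k = 1 / 2 ^ k"
    by (simp add: field_simps)
  then show ?thesis
    by (simp add: dyadic_atom_def emeasure_lborel_Ico divide_right_mono)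
qed

lemma mem_dyadic_atom_iff: "x \<in> dyadic_atom k j \<longleftrightarrow> 0 \<le> x \<and> \<lfloor>2 ^ k * x\<rfloor> = int j"
proof -
  have "x \<in> dyadic_atom k j \<longleftrightarrow> real j \<le> 2 ^ k * x \<and> 2 ^ k * x < real j + 1"
    by (auto simp: dyadic_atom_def field_simps)
  also have "\<dots> \<longleftrightarrow> 0 \<le> x \<and> \<lfloor>2 ^ k * x\<rfloor> = int j"
  proof
    assume j: "real j \<le> 2 ^ k * x \<and> 2 ^ k * x < real j + 1"
    then have "0 \<le> 2 ^ k * x"
      by (meson of_nat_0_le_iff order_trans)
    then show "0 \<le> x \<and> \<lfloor>2 ^ k * x\<rfloor> = int j"
      using j by (simp add: floor_eq_iff zero_le_mult_iff power_le_zero_eq)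
  qed (simp add: floor_eq_iff)
  finally show ?thesis .
qed

lemma dyadic_atom_subset: "j < 2 ^ k \<Longrightarrow> dyadic_atom k j \<subseteq> {0..<1}"
proof -
  assume "j < 2 ^ k"
  then have "real j + 1 \<le> 2 ^ k"
    by (metis Suc_leI add.commute of_nat_Suc of_nat_le_iff of_nat_numeral of_nat_power)
  then have "(real j + 1) / 2 ^ k \<le> 1"
    by simp
  then show ?thesis
    unfolding dyadic_atom_def by (auto intro: order_trans[rotated] order_less_le_trans)
qed

lemma dyadic_atom_split:
  "dyadic_atom k j = dyadic_atom (Suc k) (2 * j) \<union> dyadic_atom (Suc k) (2 * j + 1)"
  "dyadic_atom (Suc k) (2 * j) \<inter> dyadic_atom (Suc k) (2 * j + 1) = {}"
  by (auto simp: dyadic_atom_def field_simps)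

lemma floor_mult_mem_dyadic_atom:
  assumes "x \<in> dyadic_atom N i" "k \<le> N"
  shows "\<lfloor>2 ^ k * x\<rfloor> = int (i div 2 ^ (N - k))"
proof -
  have "(2::real) ^ N = 2 ^ k * 2 ^ (N - k)"
    using assms(2) by (simp flip: power_add)
  then have "\<lfloor>2 ^ k * x\<rfloor> = \<lfloor>2 ^ N * x / real_of_int (2 ^ (N - k))\<rfloor>"
    by simp
  also have "\<dots> = \<lfloor>2 ^ N * x\<rfloor> div 2 ^ (N - k)"
    by (rule floor_divide_real_eq_div) simp
  finally show ?thesis
    using assms(1) by (simp add: mem_dyadic_atom_iff zdiv_int)
qed

lemma dyadic_interval_eq_dyadic_atom:
  "x \<in> dyadic_atom N i \<Longrightarrow> k \<le> N \<Longrightarrow> dyadic_interval k x = dyadic_atom k (i div 2 ^ (N - k))"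
  by (simp add: dyadic_interval_def dyadic_atom_def floor_mult_mem_dyadic_atom)

lemma indicator_unit_interval_eq_sum_dyadic_atoms:
  "(indicator {0..<1} x :: ennreal) = (\<Sum>i<2 ^ N. indicator (dyadic_atom N i) x)"
proof (cases "0 \<le> x")
  case True
  define i0 where "i0 = nat \<lfloor>2 ^ N * x\<rfloor>"
  have fl: "\<lfloor>2 ^ N * x\<rfloor> = int i0"
    using True by (simp add: i0_def)
  have "(\<Sum>i<2 ^ N. indicator (dyadic_atom N i) x :: ennreal) = (\<Sum>i<2 ^ N. if i = i0 then 1 else 0)"
    by (intro sum.cong) (auto simp: mem_dyadic_atom_iff True fl indicator_def)
  also have "\<dots> = (if i0 < 2 ^ N then 1 else 0)"
    by simp
  also have "i0 < 2 ^ N \<longleftrightarrow> x < 1"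
  proof
    assume "i0 < 2 ^ N"
    moreover have "x \<in> dyadic_atom N i0"
      using True fl by (simp add: mem_dyadic_atom_iff)
    ultimately show "x < 1"
      using dyadic_atom_subset by fastforce
  next
    assume "x < 1"
    then have "2 ^ N * x < 2 ^ N"
      by simp
    then have "\<lfloor>2 ^ N * x\<rfloor> < 2 ^ N"
      by (simp add: floor_less_iff)
    then have "int i0 < int (2 ^ N)"
      using fl by simp
    then show "i0 < 2 ^ N"
      by linarith
  qed
  finally show ?thesis
    using True by (simp add: indicator_def)
qed (simp add: mem_dyadic_atom_iff)

lemma nn_integral_unit_interval_eq_sum_dyadic_atoms:
  assumes [measurable]: "g \<in> borel_measurable lborel"
  shows "(\<integral>\<^sup>+ x \<in> {0..<1}. g x \<partial>lborel)
           = (\<Sum>i<2 ^ N. \<integral>\<^sup>+ x \<in> dyadic_atom N i. g x \<partial>lborel)"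
proof -
  have "(\<integral>\<^sup>+ x \<in> {0..<1}. g x \<partial>lborel)
      = (\<integral>\<^sup>+ x. (\<Sum>i<2 ^ N. g x * indicator (dyadic_atom N i) x) \<partial>lborel)"
    by (simp add: indicator_unit_interval_eq_sum_dyadic_atoms[of _ N] sum_distrib_left)
  also have "\<dots> = (\<Sum>i<2 ^ N. \<integral>\<^sup>+ x \<in> dyadic_atom N i. g x \<partial>lborel)"
    by (intro nn_integral_sum) measurable
  finally show ?thesis .
qed

lemma set_nn_integral_norm_sq_le:
  fixes f :: "'a \<Rightarrow> 'b::real_normed_vector"
  assumes [measurable]: "f \<in> borel_measurable M" "A \<in> sets M"
  shows "(\<integral>\<^sup>+ x \<in> A. ennreal (norm (f x)) \<partial>M)\<^sup>2
           \<le> emeasure M A * (\<integral>\<^sup>+ x \<in> A. ennreal ((norm (f x))\<^sup>2) \<partial>M)"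
proof -
  have "(\<integral>\<^sup>+ x \<in> A. ennreal (norm (f x)) \<partial>M)\<^sup>2
      = (\<integral>\<^sup>+ x. (ennreal (norm (f x)) * indicator A x) * indicator A x \<partial>M)\<^sup>2"
    by (intro arg_cong[where f = "\<lambda>t. t\<^sup>2"] nn_integral_cong) (simp add: indicator_def)
  also have "\<dots> \<le> (\<integral>\<^sup>+ x. (ennreal (norm (f x)) * indicator A x)\<^sup>2 \<partial>M)
      * (\<integral>\<^sup>+ x. (indicator A x)\<^sup>2 \<partial>M)"
    by (rule Cauchy_Schwarz_nn_integral) measurable
  also have "\<dots> = (\<integral>\<^sup>+ x \<in> A. ennreal ((norm (f x))\<^sup>2) \<partial>M) * (\<integral>\<^sup>+ x. indicator A x \<partial>M)"
    by (intro arg_cong2[where f = times] nn_integral_cong)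
      (simp_all add: indicator_def power_mult_distrib ennreal_power)
  finally show ?thesis
    by (simp add: mult.commute)
qed

lemma ennreal_numeral_power: "ennreal (numeral b ^ n) = numeral b ^ n"
  by (simp add: ennreal_power[symmetric])

lemma in_L2_set_integrable:
  assumes "in_L2 f" "A \<in> sets lborel" "A \<subseteq> {0..<1}"
  shows "set_integrable lborel A f"
proof -
  have [measurable]: "f \<in> borel_measurable lborel" "A \<in> sets lborel"
    using assms by (simp_all add: in_L2_def)
  have "(\<integral>\<^sup>+ x \<in> A. ennreal (cmod (f x)) \<partial>lborel)\<^sup>2
      \<le> emeasure lborel A * (\<integral>\<^sup>+ x \<in> A. ennreal ((cmod (f x))\<^sup>2) \<partial>lborel)"
    by (rule set_nn_integral_norm_sq_le) measurable
  also have "\<dots> \<le> emeasure lborel {0..<1::real} * L2sq f"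
    unfolding L2sq_def using assms(3)
    by (intro mult_mono emeasure_mono nn_integral_mono) (auto simp: indicator_def)
  also have "\<dots> < \<infinity>"
    using assms(1) by (simp add: in_L2_def)
  finally have "(\<integral>\<^sup>+ x \<in> A. ennreal (cmod (f x)) \<partial>lborel) < \<infinity>"
    by (simp add: power_less_top_ennreal)
  moreover have "(\<integral>\<^sup>+ x. ennreal (cmod (indicator A x *\<^sub>R f x)) \<partial>lborel)
      = (\<integral>\<^sup>+ x \<in> A. ennreal (cmod (f x)) \<partial>lborel)"
    by (intro nn_integral_cong) (simp add: indicator_def)
  ultimately show ?thesis
    by (simp add: set_integrable_def integrable_iff_bounded)
qed

definition atom_norm_integral :: "(real \<Rightarrow> complex) \<Rightarrow> nat \<Rightarrow> nat \<Rightarrow> real" where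
  "atom_norm_integral f k j = (LINT t : dyadic_atom k j | lborel. cmod (f t))"

lemma atom_norm_integral_nonneg: "0 \<le> atom_norm_integral f k j"
  unfolding atom_norm_integral_def set_lebesgue_integral_def
  by (intro integral_nonneg_AE) (auto simp: indicator_def)

lemma atom_norm_integral_split:
  assumes "in_L2 f" "j < 2 ^ k"
  shows "atom_norm_integral f k j = atom_norm_integral f (Suc k) (2 * j) + atom_norm_integral f (Suc k) (2 * j + 1)"
proof -
  have "set_integrable lborel (dyadic_atom (Suc k) j') (\<lambda>t. cmod (f t))" if "j' < 2 ^ Suc k" for j'
    using that by (intro set_integrable_norm in_L2_set_integrable assms(1) dyadic_atom_sets dyadic_atom_subset)
  then show ?thesis
    unfolding atom_norm_integral_def dyadic_atom_split(1)[of k j]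
    using assms(2) by (intro set_integral_Un dyadic_atom_split(2)) auto
qed

lemma dyadic_martingale_atom_norm_averages:
  "in_L2 f \<Longrightarrow> dyadic_martingale N (\<lambda>k j. 2 ^ k * atom_norm_integral f k j)"
  unfolding dyadic_martingale_def
  by (metis (no_types, lifting) atom_norm_integral_split distrib_left mult.assoc power_Suc)

lemma norm_dyadic_cond_exp_le:
  assumes "x \<in> dyadic_atom N i" "k \<le> N"
  shows "cmod (dyadic_cond_exp k f x) \<le> 2 ^ k * atom_norm_integral f k (i div 2 ^ (N - k))"
  using integral_norm_bound[of lborel "\<lambda>t. indicator (dyadic_atom k (i div 2 ^ (N - k))) t *\<^sub>R f t"]
  by (simp add: dyadic_cond_exp_def dyadic_interval_eq_dyadic_atom[OF assms] atom_norm_integral_def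
      set_lebesgue_integral_def norm_mult norm_power)

lemma atom_norm_integral_sq_le:
  assumes "in_L2 f" "i < 2 ^ N"
  shows "ennreal (2 ^ N * (atom_norm_integral f N i)\<^sup>2)
           \<le> (\<integral>\<^sup>+ x \<in> dyadic_atom N i. ennreal ((cmod (f x))\<^sup>2) \<partial>lborel)"
proof -
  have f_meas [measurable]: "f \<in> borel_measurable lborel"
    using assms(1) by (simp add: in_L2_def)
  have "set_integrable lborel (dyadic_atom N i) (\<lambda>t. cmod (f t))"
    using assms by (intro set_integrable_norm in_L2_set_integrable dyadic_atom_sets dyadic_atom_subset)
  then have "ennreal (atom_norm_integral f N i) = (\<integral>\<^sup>+ x \<in> dyadic_atom N i. ennreal (cmod (f x)) \<partial>lborel)"
    unfolding atom_norm_integral_def set_lebesgue_integral_def set_integrable_def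
    by (subst nn_integral_eq_integral[symmetric]) (auto intro!: nn_integral_cong simp: indicator_def)
  then have "ennreal (2 ^ N * (atom_norm_integral f N i)\<^sup>2)
      = 2 ^ N * (\<integral>\<^sup>+ x \<in> dyadic_atom N i. ennreal (cmod (f x)) \<partial>lborel)\<^sup>2"
    by (simp add: ennreal_mult ennreal_numeral_power atom_norm_integral_nonneg flip: ennreal_power)
  also have "\<dots> \<le> 2 ^ N * (ennreal (1 / 2 ^ N)
      * (\<integral>\<^sup>+ x \<in> dyadic_atom N i. ennreal ((cmod (f x))\<^sup>2) \<partial>lborel))"
    using set_nn_integral_norm_sq_le[OF f_meas dyadic_atom_sets]
    by (intro mult_left_mono) (simp_all add: emeasure_dyadic_atom)
  also have "\<dots> = (2 ^ N * ennreal (1 / 2 ^ N))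
      * (\<integral>\<^sup>+ x \<in> dyadic_atom N i. ennreal ((cmod (f x))\<^sup>2) \<partial>lborel)"
    by (simp only: mult.assoc)
  also have "(2::ennreal) ^ N * ennreal (1 / 2 ^ N) = ennreal (2 ^ N) * ennreal (1 / 2 ^ N)"
    by (simp add: ennreal_numeral_power)
  also have "\<dots> = 1"
    by (simp flip: ennreal_mult)
  finally show ?thesis
    by simp
qed

lemma sum_atom_norm_integral_sq_le_L2sq:
  assumes "in_L2 f"
  shows "ennreal (\<Sum>i<2 ^ N. 2 ^ N * (atom_norm_integral f N i)\<^sup>2) \<le> L2sq f"
proof -
  have [measurable]: "f \<in> borel_measurable lborel"
    using assms by (simp add: in_L2_def)
  have "ennreal (\<Sum>i<2 ^ N. 2 ^ N * (atom_norm_integral f N i)\<^sup>2)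
      = (\<Sum>i<2 ^ N. ennreal (2 ^ N * (atom_norm_integral f N i)\<^sup>2))"
    by (rule sum_ennreal[symmetric]) simp
  also have "\<dots> \<le> (\<Sum>i<2 ^ N. \<integral>\<^sup>+ x \<in> dyadic_atom N i. ennreal ((cmod (f x))\<^sup>2) \<partial>lborel)"
    using assms by (intro sum_mono atom_norm_integral_sq_le) auto
  also have "\<dots> = L2sq f"
    unfolding L2sq_def by (rule nn_integral_unit_interval_eq_sum_dyadic_atoms[symmetric]) measurable
  finally show ?thesis .
qed

lemma sum_diff_mult_eq_sum_mult_diff:
  fixes e E :: "nat \<Rightarrow> 'a::comm_ring"
  shows "(\<Sum>k = 0..N. (e k - e (Suc k)) * E k) =
         e 0 * E 0 - e (Suc N) * E N + (\<Sum>k = 1..N. e k * (E k - E (k - 1)))"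
  by (induction N) (simp_all add: algebra_simps)

lemma norm_sum_mult_diff_le:
  fixes e E :: "nat \<Rightarrow> 'a::real_normed_field"
  assumes "e 0 = 0" "e (Suc N) = 0" and bound: "\<And>k. k \<le> N \<Longrightarrow> norm (E k) \<le> R"
  shows "norm (\<Sum>k = 1..N. e k * (E k - E (k - 1))) \<le> (\<Sum>k = 0..N. norm (e k - e (Suc k))) * R"
proof -
  have "(\<Sum>k = 1..N. e k * (E k - E (k - 1))) = (\<Sum>k = 0..N. (e k - e (Suc k)) * E k)"
    using sum_diff_mult_eq_sum_mult_diff[of e E N] assms(1,2) by simp
  also have "norm \<dots> \<le> (\<Sum>k = 0..N. norm (e k - e (Suc k)) * R)"
    using bound by (intro sum_norm_le) (simp add: norm_mult mult_left_mono)
  finally show ?thesis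
    by (simp add: sum_distrib_right)
qed

definition max_row_variation :: "nat \<Rightarrow> nat \<Rightarrow> (nat \<Rightarrow> nat \<Rightarrow> complex) \<Rightarrow> real" where
  "max_row_variation M N a =
     (MAX j \<in> {1..M}. \<Sum>k = 0..N. cmod (ext_entry N a j k - ext_entry N a j (k + 1)))"

lemma row_variation_le_max_row_variation:
  "j \<in> {1..M} \<Longrightarrow>
    (\<Sum>k = 0..N. cmod (ext_entry N a j k - ext_entry N a j (k + 1))) \<le> max_row_variation M N a"
  unfolding max_row_variation_def by (intro Max_ge) auto

lemma max_row_variation_nonneg:
  assumes "1 \<le> M"
  shows "0 \<le> max_row_variation M N a"
proof -
  have "0 \<le> (\<Sum>k = 0..N. cmod (ext_entry N a 1 k - ext_entry N a 1 (k + 1)))"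
    by (intro sum_nonneg) simp
  also have "\<dots> \<le> max_row_variation M N a"
    using assms by (intro row_variation_le_max_row_variation) simp
  finally show ?thesis .
qed

lemma max_transform_nonneg:
  assumes "1 \<le> M"
  shows "0 \<le> max_transform M N a f x"
proof -
  have "cmod (\<Sum>k = 1..N. a 1 k * dyadic_diff k f x) \<le> max_transform M N a f x"
    unfolding max_transform_def using assms by (intro Max_ge) auto
  then show ?thesis
    using norm_ge_zero order_trans by blast
qed

lemma max_transform_le_running_max:
  assumes "x \<in> dyadic_atom N i" "1 \<le> M"
  shows "max_transform M N a f x \<le>
           max_row_variation M N a * running_max (\<lambda>m. 2 ^ m * atom_norm_integral f m (i div 2 ^ (N - m))) N"
    (is "_ \<le> _ * ?R")
proof -
  have cond_exp_le: "cmod (dyadic_cond_exp k f x) \<le> ?R" if "k \<le> N" for k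
    using norm_dyadic_cond_exp_le[OF assms(1) that, of f]
      running_max_ge[OF that, of "\<lambda>m. 2 ^ m * atom_norm_integral f m (i div 2 ^ (N - m))"]
    by simp
  have "cmod (\<Sum>k = 1..N. a j k * dyadic_diff k f x) \<le> max_row_variation M N a * ?R"
    if j: "j \<in> {1..M}" for j
  proof -
    have "cmod (\<Sum>k = 1..N. a j k * dyadic_diff k f x)
        = cmod (\<Sum>k = 1..N. ext_entry N a j k * (dyadic_cond_exp k f x - dyadic_cond_exp (k - 1) f x))"
      by (intro arg_cong[where f = cmod] sum.cong) (simp_all add: ext_entry_def dyadic_diff_def)
    also have "\<dots> \<le> (\<Sum>k = 0..N. cmod (ext_entry N a j k - ext_entry N a j (Suc k))) * ?R"
      by (intro norm_sum_mult_diff_le cond_exp_le) (simp_all add: ext_entry_def)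
    also have "\<dots> \<le> max_row_variation M N a * ?R"
      using row_variation_le_max_row_variation[OF j] cond_exp_le[of 0]
      by (intro mult_right_mono) (simp_all add: order_trans[OF norm_ge_zero])
    finally show ?thesis .
  qed
  then show ?thesis
    using assms(2) by (simp add: max_transform_def)
qed

lemma L2sq_le_sum_dyadic_atoms:
  assumes "\<And>i x. i < 2 ^ N \<Longrightarrow> x \<in> dyadic_atom N i \<Longrightarrow> cmod (g x) \<le> c i"
  shows "L2sq g \<le> ennreal (\<Sum>i<2 ^ N. (c i)\<^sup>2 / 2 ^ N)"
proof -
  have "L2sq g \<le> (\<integral>\<^sup>+ x. (\<Sum>i<2 ^ N. ennreal ((c i)\<^sup>2) * indicator (dyadic_atom N i) x) \<partial>lborel)"
    unfolding L2sq_def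
  proof (intro nn_integral_mono)
    fix x
    have "ennreal ((cmod (g x))\<^sup>2) * indicator (dyadic_atom N i) x
        \<le> ennreal ((c i)\<^sup>2) * indicator (dyadic_atom N i) x"
      if "i < 2 ^ N" for i
      using assms[OF that] by (cases "x \<in> dyadic_atom N i") (auto intro!: ennreal_leI power_mono)
    then show "ennreal ((cmod (g x))\<^sup>2) * indicator {0..<1} x
        \<le> (\<Sum>i<2 ^ N. ennreal ((c i)\<^sup>2) * indicator (dyadic_atom N i) x)"
      unfolding indicator_unit_interval_eq_sum_dyadic_atoms[of x N] sum_distrib_left
      by (intro sum_mono) simp
  qed
  also have "\<dots> = (\<Sum>i<2 ^ N. ennreal ((c i)\<^sup>2) * emeasure lborel (dyadic_atom N i))"
    by (subst nn_integral_sum) (auto intro!: sum.cong nn_integral_cmult_indicator simp: dyadic_atom_def)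
  also have "\<dots> = ennreal (\<Sum>i<2 ^ N. (c i)\<^sup>2 / 2 ^ N)"
    by (simp add: emeasure_dyadic_atom sum_ennreal ennreal_mult[symmetric])
  finally show ?thesis .
qed

lemma L2sq_max_transform_le:
  assumes f: "in_L2 f" and M: "1 \<le> M"
  shows "L2sq (\<lambda>x. complex_of_real (max_transform M N a f x))
           \<le> ennreal ((2 * max_row_variation M N a)\<^sup>2) * L2sq f"
proof -
  define V where "V = max_row_variation M N a"
  define y where "y m j = 2 ^ m * atom_norm_integral f m j" for m j
  define R where "R i = running_max (\<lambda>m. y m (i div 2 ^ (N - m))) N" for i
  have "cmod (complex_of_real (max_transform M N a f x)) \<le> V * R i" if "x \<in> dyadic_atom N i" for i x
    using max_transform_le_running_max[OF that M, of a f] max_transform_nonneg[OF M, of N a f x]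
    by (simp add: V_def R_def y_def)
  then have "L2sq (\<lambda>x. complex_of_real (max_transform M N a f x))
      \<le> ennreal (\<Sum>i<2 ^ N. (V * R i)\<^sup>2 / 2 ^ N)"
    by (intro L2sq_le_sum_dyadic_atoms)
  also have "\<dots> \<le> ennreal ((2 * V)\<^sup>2 * (\<Sum>i<2 ^ N. 2 ^ N * (atom_norm_integral f N i)\<^sup>2))"
  proof (intro ennreal_leI)
    have "(\<Sum>i<2 ^ N. (V * R i)\<^sup>2 / 2 ^ N) = V\<^sup>2 / 2 ^ N * (\<Sum>i<2 ^ N. (R i)\<^sup>2)"
      by (simp add: sum_distrib_left power_mult_distrib)
    also have "\<dots> \<le> V\<^sup>2 / 2 ^ N * (4 * (\<Sum>i<2 ^ N. (y N i)\<^sup>2))"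
      unfolding R_def y_def
      by (intro mult_left_mono dyadic_martingale_doob_maximal_L2 dyadic_martingale_atom_norm_averages f) simp
    also have "\<dots> = (2 * V)\<^sup>2 * (\<Sum>i<2 ^ N. 2 ^ N * (atom_norm_integral f N i)\<^sup>2)"
      by (simp add: y_def sum_distrib_left power_mult_distrib power2_eq_square mult_ac)
    finally show "(\<Sum>i<2 ^ N. (V * R i)\<^sup>2 / 2 ^ N) \<le> \<dots>" .
  qed
  also have "\<dots> = ennreal ((2 * V)\<^sup>2) * ennreal (\<Sum>i<2 ^ N. 2 ^ N * (atom_norm_integral f N i)\<^sup>2)"
    by (rule ennreal_mult') simp
  also have "\<dots> \<le> ennreal ((2 * V)\<^sup>2) * L2sq f"
    by (intro mult_left_mono sum_atom_norm_integral_sq_le_L2sq f) simp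
  finally show ?thesis
    by (simp add: V_def)
qed

theorem proposition3p1:
  "\<exists>C::real. \<forall>(M::nat) (N::nat) (a::nat \<Rightarrow> nat \<Rightarrow> complex). 1 \<le> M \<longrightarrow>
     h_const M N a \<le>
       ereal (C * (MAX j \<in> {1..M}. \<Sum>k = 0..N. cmod (ext_entry N a j k - ext_entry N a j (k + 1))))"
  unfolding max_row_variation_def[symmetric]
proof (intro exI[of _ 2] allI impI)
  fix M N :: nat and a :: "nat \<Rightarrow> nat \<Rightarrow> complex"
  assume M: "1 \<le> M"
  show "h_const M N a \<le> ereal (2 * max_row_variation M N a)"
    unfolding h_const_def
    using max_row_variation_nonneg[OF M] L2sq_max_transform_le[OF _ M] by (intro Inf_lower) auto
qed

end
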